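(* For every poset $P$ and every $n\in\omega$: $P\models\psi_n$ if and only if for all $p,q\in P$ with $p\not\leq q$, $\exists$ has an $n$-strategy for the game with starting position $(\{p\},\{q\})$.
   Context: Work in the first-order signature with one binary relation $\leq$. Let $J(x,y,z)$ express that $z$ is the join of $x,y$ (namely $x\leq z\wedge y\leq z\wedge\forall w((x\leq w\wedge y\leq w)\to z\leq w)$) and $M(x,y,z)$ that $z$ is their meet. Let $C_k(x_1,\ldots,x_k,y)=\bigvee_{i=1}^k(y=x_i)$ (false for $k=0$), $D_k=\neg C_k$, $\vec{x}_m=(x_1,\ldots,x_m)$. Define $\phi_{m0}(\vec{x}_m,y)=D_m(\vec{x}_m,y)$ and $\phi_{m(n+1)}(\vec{x}_m,y)=\forall a\forall b\forall c\Big(\big(\exists d(C_m(\vec{x}_m,d)\wedge d\leq a)\to\phi_{(m+1)n}(\vec{x}_m,a,y)\big)\wedge\big((C_m(\vec{x}_m,a)\wedge C_m(\vec{x}_m,b)\wedge M(a,b,c))\to\phi_{(m+1)n}(\vec{x}_m,c,y)\big)\wedge\big((C_m(\vec{x}_m,c)\wedge J(a,b,c))\to(\phi_{(m+1)n}(\vec{x}_m,a,y)\vee\phi_{(m+1)n}(\vec{x}_m,b,y))\big)\Big)$, and $\psi_n=\forall x\forall y(\neg(x\leq y)\to\phi_{1n}(x,y))$. The game: for a poset $P$ and $U_0,V\subseteq P$, the game with starting position $(U_0,V)$ is played between $\forall$ and $\exists$ in rounds $0,1,2,\ldots$; a set $U$ is maintained, initially $U_0$, with $V$ fixed. Each round $\forall$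 moves and $\exists$ responds: (1) if $b\geq a$ for some $a\in U$, $\forall$ may play $(b)$ and $\exists$ must add $b$ to $U$; (2) if $a,b\in U$ and $a\wedge b$ exists, $\forall$ may play $(a,b)$ and $\exists$ must add $a\wedge b$; (3) if $a\vee b$ exists and lies in $U$, $\forall$ may play $(a,b)$ and $\exists$ must choose one of $a,b$ and add it to $U$. $\forall$ wins in round $n$ if $U\cap V\neq\emptyset$ at the beginning of round $n$. $\exists$ has an $n$-strategy if she can guarantee that $\forall$ does not win until at least round $n+1$. *)

theory Defs
  imports Main
begin

definition is_poset :: "'a set \<Rightarrow> ('a \<Rightarrow> 'a \<Rightarrow> bool) \<Rightarrow> bool" where
  "is_poset P le \<longleftrightarrow>
     (\<forall>x\<in>P. le x x) \<and>
     (\<forall>x\<in>P. \<forall>y\<in>P. le x y \<and> le y x \<longrightarrow> x = y) \<and>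
     (\<forall>x\<in>P. \<forall>y\<in>P. \<forall>z\<in>P. le x y \<and> le y z \<longrightarrow> le x z)"

definition isJ :: "'a set \<Rightarrow> ('a \<Rightarrow> 'a \<Rightarrow> bool) \<Rightarrow> 'a \<Rightarrow> 'a \<Rightarrow> 'a \<Rightarrow> bool" where
  "isJ P le x y z \<longleftrightarrow> le x z \<and> le y z \<and> (\<forall>w\<in>P. (le x w \<and> le y w) \<longrightarrow> le z w)"

definition isM :: "'a set \<Rightarrow> ('a \<Rightarrow> 'a \<Rightarrow> bool) \<Rightarrow> 'a \<Rightarrow> 'a \<Rightarrow> 'a \<Rightarrow> bool" where
  "isM P le x y z \<longleftrightarrow> le z x \<and> le z y \<and> (\<forall>w\<in>P. (le w x \<and> le w y) \<longrightarrow> le w z)"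

definition Ck :: "'a list \<Rightarrow> 'a \<Rightarrow> bool" where
  "Ck xs y \<longleftrightarrow> (\<exists>i<length xs. y = xs ! i)"

definition Dk :: "'a list \<Rightarrow> 'a \<Rightarrow> bool" where
  "Dk xs y \<longleftrightarrow> \<not> Ck xs y"

text \<open>Semantics in (P, le) of phi_{m n}(xs, y), where m = length xs.\<close>
fun phi :: "'a set \<Rightarrow> ('a \<Rightarrow> 'a \<Rightarrow> bool) \<Rightarrow> nat \<Rightarrow> 'a list \<Rightarrow> 'a \<Rightarrow> bool" where
  "phi P le 0 xs y = Dk xs y"
| "phi P le (Suc n) xs y =
     (\<forall>a\<in>P. \<forall>b\<in>P. \<forall>c\<in>P.
        ((\<exists>d\<in>P. Ck xs d \<and> le d a) \<longrightarrow> phi P le n (xs @ [a]) y) \<and>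
        ((Ck xs a \<and> Ck xs b \<and> isM P le a b c) \<longrightarrow> phi P le n (xs @ [c]) y) \<and>
        ((Ck xs c \<and> isJ P le a b c) \<longrightarrow> (phi P le n (xs @ [a]) y \<or> phi P le n (xs @ [b]) y)))"

definition psi :: "'a set \<Rightarrow> ('a \<Rightarrow> 'a \<Rightarrow> bool) \<Rightarrow> nat \<Rightarrow> bool" where
  "psi P le n \<longleftrightarrow> (\<forall>x\<in>P. \<forall>y\<in>P. \<not> le x y \<longrightarrow> phi P le n [x] y)"

text \<open>estrat P le n U V: in the game from position (U,V) (at the beginning of some round),
  Exists can guarantee that U \<inter> V = {} at the beginning of this round and of each of the
  next n rounds, i.e. Forall does not win within these n+1 round-beginnings.
  With U the starting position at round 0, this is exactly an n-strategy.\<close>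
fun estrat :: "'a set \<Rightarrow> ('a \<Rightarrow> 'a \<Rightarrow> bool) \<Rightarrow> nat \<Rightarrow> 'a set \<Rightarrow> 'a set \<Rightarrow> bool" where
  "estrat P le 0 U V = (U \<inter> V = {})"
| "estrat P le (Suc n) U V =
     (U \<inter> V = {} \<and>
      \<comment> \<open>move (1): b \<ge> a for some a in U\<close>
      (\<forall>b\<in>P. (\<exists>a\<in>U. le a b) \<longrightarrow> estrat P le n (insert b U) V) \<and>
      \<comment> \<open>move (2): a, b in U and their meet c exists\<close>
      (\<forall>a\<in>U. \<forall>b\<in>U. \<forall>c\<in>P. isM P le a b c \<longrightarrow> estrat P le n (insert c U) V) \<and>
      \<comment> \<open>move (3): the join c of a, b exists and lies in U; Exists picks a or b\<close>
      (\<forall>a\<in>P. \<forall>b\<in>P. \<forall>c\<in>U. isJ P le a b c \<longrightarrow>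
          (estrat P le n (insert a U) V \<or> estrat P le n (insert b U) V)))"

end

theory Submission
  imports Defs
begin

text \<open>Read semantically, \<open>\<phi>\<^sub>m\<^sub>n(x\<^sub>1,\<dots>,x\<^sub>m,y)\<close> says that \<open>\<exists>\<close> has an \<open>n\<close>-strategy from the
  position \<open>({x\<^sub>1,\<dots>,x\<^sub>m},{y})\<close>: its three conjuncts are the three kinds of move of \<open>\<forall>\<close>, the
  disjunction in the join clause is the choice of \<open>\<exists>\<close>, and the appended variable is the element
  added to \<open>U\<close>. The one requirement of a strategy not written into \<open>\<phi>\<close> is that \<open>U \<inter> V = {}\<close>
  at the current round; it is implied anyway, because by reflexivity \<open>\<forall>\<close> may play
  \<open>b \<ge> b\<close> for some \<open>b \<in> U\<close>, a move that leaves \<open>U\<close> unchanged.\<close>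

lemma Ck_iff_mem_set: "Ck xs y \<longleftrightarrow> y \<in> set xs"
  by (auto simp: Ck_def in_set_conv_nth)

lemma estrat_imp_disjoint: "estrat P le n U V \<Longrightarrow> U \<inter> V = {}"
  by (cases n) auto

lemma phi_iff_estrat:
  assumes refl: "\<forall>x\<in>P. le x x" and "set xs \<subseteq> P" and "xs \<noteq> []"
  shows "phi P le n xs y \<longleftrightarrow> estrat P le n (set xs) {y}"
  using assms(2,3)
proof (induction n arbitrary: xs)
  case 0
  then show ?case by (simp add: Dk_def Ck_iff_mem_set)
next
  case (Suc n)
  have IH: "phi P le n (xs @ [a]) y \<longleftrightarrow> estrat P le n (insert a (set xs)) {y}" if "a \<in> P" for a
    using Suc that by simp
  obtain x where x: "x \<in> set xs" "x \<in> P"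
    using Suc.prems by (cases xs) auto
  have "y \<notin> set xs" if "phi P le (Suc n) xs y"
  proof -
    have "phi P le n (xs @ [x]) y"
      using that x refl by (simp add: Ck_iff_mem_set) blast
    then have "estrat P le n (set xs) {y}"
      using IH[OF \<open>x \<in> P\<close>] \<open>x \<in> set xs\<close> by (simp add: insert_absorb)
    then show ?thesis
      using estrat_imp_disjoint by blast
  qed
  then show ?case
    using Suc.prems IH by (auto simp: Ck_iff_mem_set) (meson subsetD)+
qed

theorem proposition4p2:
  fixes P :: "'a set" and le :: "'a \<Rightarrow> 'a \<Rightarrow> bool" and n :: nat
  assumes "is_poset P le"
  shows "psi P le n \<longleftrightarrow>
         (\<forall>p\<in>P. \<forall>q\<in>P. \<not> le p q \<longrightarrow> estrat P le n {p} {q})"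
proof -
  have "\<forall>x\<in>P. le x x"
    using assms by (simp add: is_poset_def)
  then have "phi P le n [p] q \<longleftrightarrow> estrat P le n {p} {q}" if "p \<in> P" for p q
    using phi_iff_estrat[of P le "[p]"] that by simp
  then show ?thesis
    unfolding psi_def by auto
qed

end
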